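(* Let $m\ge 2$ be an even integer and $k$ an integer with $\gcd(k,m)=1$. Let $\alpha\in\mathbb{F}_{2^m}$, $\alpha\neq 0$, and let $\sigma$ be a field automorphism of $\mathbb{F}_{2^m}$. Define $f:\mathbb{F}_{2^m}^2\to\mathbb{F}_{2^m}^2$ (identifying $\mathbb{F}_{2^m}^2$ additively with $\mathbb{F}_{2^{2m}}$) by $$f(x,y)=\big(x^{2^k+1}+\alpha\,\sigma(y^{2^k+1}),\ xy\big).$$ Then $f$ is APN if and only if $\alpha$ cannot be written as $a^{2^k+1}(t^{2^k}+t)^{1-\sigma}$ with $a,t\in\mathbb{F}_{2^m}$ and $t^{2^k}+t\neq 0$, where $z^{1-\sigma}$ denotes $z/\sigma(z)$ for $z\neq 0$.
   Context: A function $f$ on an elementary abelian $2$-group $V$ (here $V=\mathbb{F}_{2^{2m}}$) is almost perfect nonlinear (APN) if for every $a\neq 0$ and every $b$ the equation $f(x+a)-f(x)=b$ has at most two solutions $x\in V$. *)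

theory Defs
  imports Main "HOL-Library.Product_Plus"
begin

definition APN :: "('v::{ab_group_add,finite} \<Rightarrow> 'v) \<Rightarrow> bool" where
  "APN f \<longleftrightarrow> (\<forall>a b. a \<noteq> 0 \<longrightarrow> card {x. f (x + a) - f x = b} \<le> 2)"

definition field_automorphism :: "('a::field \<Rightarrow> 'a) \<Rightarrow> bool" where
  "field_automorphism \<sigma> \<longleftrightarrow> bij \<sigma> \<and> \<sigma> 1 = 1 \<and>
     (\<forall>x y. \<sigma> (x + y) = \<sigma> x + \<sigma> y) \<and> (\<forall>x y. \<sigma> (x * y) = \<sigma> x * \<sigma> y)"

end

theory Submission
  imports Defs "HOL-Computational_Algebra.Primes"
begin

text \<open>The map f is quadratic over GF(2): f(p + q) - f(p) - f(q) = B(p, q) with B additive in p,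
  so f is APN iff for every q \<noteq> 0 the kernel of B(\<cdot>, q) is just {0, q}. For p = (x, y) and
  q = (a, b) the second coordinate of B(p, q) = 0 forces p = u q, and the first then reads
  a^(2^k+1) s + \<alpha> \<sigma>(b^(2^k+1) s) = 0 with s = u^(2^k) + u. As gcd(k, m) = 1, s vanishes only
  for u \<in> {0, 1}, i.e. p \<in> {0, q}; a solution with s \<noteq> 0 is exactly a representation
  \<alpha> = (a / \<sigma> b)^(2^k+1) s / \<sigma> s, and conversely such a representation, taken with
  q = (a, 1), yields the third kernel element (t a, t).\<close>

lemma power_card_UNIV_eq_self:
  fixes x :: "'a::{field,finite}"
  shows "x ^ card (UNIV :: 'a set) = x"
proof (cases "x = 0")
  case True
  then show ?thesis by (simp add: finite_UNIV_card_ge_0 power_0_left)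
next
  case False
  let ?U = "UNIV - {0::'a}"
  have "(\<Prod>y\<in>?U. y) = (\<Prod>y\<in>?U. x * y)"
    by (rule prod.reindex_bij_witness[of _ "\<lambda>y. x * y" "\<lambda>y. y / x"]) (use False in auto)
  also have "\<dots> = x ^ (card (UNIV :: 'a set) - 1) * (\<Prod>y\<in>?U. y)"
    by (simp add: prod.distrib card_Diff_singleton)
  finally have "x ^ (card (UNIV :: 'a set) - 1) = 1" by simp
  then show ?thesis
    using power_minus_mult[OF finite_UNIV_card_ge_0[where 'a='a], of x] by simp
qed

lemma power_two_power_eq_self_mult:
  fixes x :: "'a::monoid_mult"
  assumes "x ^ 2 ^ i = x"
  shows "x ^ 2 ^ (i * n) = x"
proof (induction n)
  case (Suc n)
  have "x ^ 2 ^ (i * Suc n) = (x ^ 2 ^ (i * n)) ^ 2 ^ i"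
    by (simp add: power_add power_mult[symmetric] mult.commute)
  then show ?case using Suc assms by simp
qed simp

lemma power_two_power_gcd_eq_self:
  fixes x :: "'a::{field,finite}"
  assumes card: "card (UNIV :: 'a set) = 2 ^ m" and fixed: "x ^ 2 ^ k = x"
  shows "x ^ 2 ^ gcd k m = x"
proof (cases "k = 0")
  case True
  then show ?thesis using power_card_UNIV_eq_self[of x] card by simp
next
  case False
  then obtain p q where pq: "k * p = m * q + gcd k m" using bezout_nat by blast
  have "x = x ^ 2 ^ (k * p)" using power_two_power_eq_self_mult[OF fixed] by simp
  also have "\<dots> = (x ^ 2 ^ (m * q)) ^ 2 ^ gcd k m"
    by (simp add: pq power_add power_mult)
  also have "x ^ 2 ^ (m * q) = x"
    using power_two_power_eq_self_mult[of x m q] power_card_UNIV_eq_self[of x] card by simp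
  finally show ?thesis by simp
qed

lemma power_two_power_fixed_points:
  fixes x :: "'a::{field,finite}"
  assumes "card (UNIV :: 'a set) = 2 ^ m" and "gcd k m = 1" and "x ^ 2 ^ k = x"
  shows "x = 0 \<or> x = 1"
proof -
  have "x ^ 2 = x" using power_two_power_gcd_eq_self[OF assms(1,3)] assms(2) by simp
  then have "x * (x - 1) = 0" by (simp add: power2_eq_square algebra_simps)
  then show ?thesis by auto
qed

lemma
  assumes "field_automorphism \<sigma>"
  shows field_automorphism_add: "\<sigma> (x + y) = \<sigma> x + \<sigma> y"
    and field_automorphism_mult: "\<sigma> (x * y) = \<sigma> x * \<sigma> y"
    and field_automorphism_zero: "\<sigma> 0 = 0"
    and field_automorphism_power: "\<sigma> (x ^ n) = \<sigma> x ^ n"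
    and field_automorphism_eq_0_iff: "\<sigma> x = 0 \<longleftrightarrow> x = 0"
proof -
  have add: "\<And>x y. \<sigma> (x + y) = \<sigma> x + \<sigma> y" and mult: "\<And>x y. \<sigma> (x * y) = \<sigma> x * \<sigma> y"
    and one: "\<sigma> 1 = 1" and "inj \<sigma>"
    using assms unfolding field_automorphism_def bij_def by auto
  show "\<sigma> (x + y) = \<sigma> x + \<sigma> y" "\<sigma> (x * y) = \<sigma> x * \<sigma> y" by (fact add mult)+
  show zero: "\<sigma> 0 = 0" using add[of 0 0] by (metis add_cancel_right_right)
  show "\<sigma> (x ^ n) = \<sigma> x ^ n" by (induction n) (simp_all add: one mult)
  show "\<sigma> x = 0 \<longleftrightarrow> x = 0" using \<open>inj \<sigma>\<close> zero by (metis injD)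
qed

text \<open>The solution sets of f(p + q) - f(p) = c are empty or translates of the kernel of B(\<cdot>, q).\<close>
lemma APN_iff_card_kernel_le_2:
  fixes f :: "'v::{ab_group_add,finite} \<Rightarrow> 'v"
  assumes diff: "\<And>p q. f (p + q) - f p = f q + B p q"
    and additive: "\<And>p p' q. B (p + p') q = B p q + B p' q"
  shows "APN f \<longleftrightarrow> (\<forall>q. q \<noteq> 0 \<longrightarrow> card {p. B p q = 0} \<le> 2)"
proof -
  have card_solutions: "card {p. f (p + q) - f p = c} = card {p. B p q = 0}"
    if p0: "f (p0 + q) - f p0 = c" for p0 q c
  proof -
    have "f (p + q) - f p = c \<longleftrightarrow> B (p - p0) q = 0" for p
    proof -
      have "B p q = B (p - p0) q + B p0 q" using additive[of "p - p0" p0 q] by simp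
      then have "B p q = B p0 q \<longleftrightarrow> B (p - p0) q = 0" by (metis add_cancel_left_left)
      then show ?thesis using p0[symmetric] by (simp add: diff)
    qed
    then have "{p. f (p + q) - f p = c} = (\<lambda>p. p - p0) -` {p. B p q = 0}"
      by simp
    moreover have "surj (\<lambda>p. p - p0)" by (rule surjI[where f = "\<lambda>p. p + p0"]) simp
    moreover have "inj (\<lambda>p. p - p0)" by (simp add: inj_def)
    ultimately show ?thesis by (metis card_vimage_inj top_greatest)
  qed
  show ?thesis
  proof
    assume "APN f"
    show "\<forall>q. q \<noteq> 0 \<longrightarrow> card {p. B p q = 0} \<le> 2"
    proof (intro allI impI)
      fix q :: 'v
      assume "q \<noteq> 0"
      then have "card {p. f (p + q) - f p = f q - f 0} \<le> 2"
        using \<open>APN f\<close> unfolding APN_def by blast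
      then show "card {p. B p q = 0} \<le> 2" using card_solutions[of 0 q] by simp
    qed
  next
    assume kernel: "\<forall>q. q \<noteq> 0 \<longrightarrow> card {p. B p q = 0} \<le> 2"
    show "APN f" unfolding APN_def
    proof (intro allI impI)
      fix q c :: 'v
      assume "q \<noteq> 0"
      show "card {p. f (p + q) - f p = c} \<le> 2"
      proof (cases "\<exists>p0. f (p0 + q) - f p0 = c")
        case True
        then show ?thesis using card_solutions kernel \<open>q \<noteq> 0\<close> by metis
      qed simp
    qed
  qed
qed

lemma add_self_CHAR_2:
  assumes "CHAR('a::ring_1) = 2"
  shows "x + x = (0::'a)"
  using minus_CHAR_2[OF assms, of x x] by simp

lemma power_two_power_add_CHAR_2:
  fixes x y :: "'a::comm_semiring_1"
  assumes "CHAR('a) = 2"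
  shows "(x + y) ^ 2 ^ n = x ^ 2 ^ n + y ^ 2 ^ n"
  using freshmans_dream'[where 'a = 'a and m = "2 ^ n" and n = n] assms by simp

definition gold_polar :: "nat \<Rightarrow> 'a::comm_semiring_1 \<Rightarrow> 'a \<Rightarrow> 'a" where
  "gold_polar k x a = x ^ 2 ^ k * a + x * a ^ 2 ^ k"

lemma power_gold_exponent_add:
  fixes x a :: "'a::comm_semiring_1"
  assumes "CHAR('a) = 2"
  shows "(x + a) ^ (2 ^ k + 1) = x ^ (2 ^ k + 1) + a ^ (2 ^ k + 1) + gold_polar k x a"
proof -
  have "(x + a) ^ 2 ^ k = x ^ 2 ^ k + a ^ 2 ^ k"
    using power_two_power_add_CHAR_2[OF assms] .
  then show ?thesis by (simp add: gold_polar_def algebra_simps)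
qed

lemma gold_polar_add_left:
  fixes x x' a :: "'a::comm_semiring_1"
  assumes "CHAR('a) = 2"
  shows "gold_polar k (x + x') a = gold_polar k x a + gold_polar k x' a"
  by (simp add: gold_polar_def power_two_power_add_CHAR_2[OF assms] algebra_simps)

lemma gold_polar_mult_self:
  fixes u a :: "'a::comm_semiring_1"
  shows "gold_polar k (u * a) a = a ^ (2 ^ k + 1) * (u ^ 2 ^ k + u)"
  by (simp add: gold_polar_def algebra_simps)

definition gold_pair_map :: "'a::field \<Rightarrow> ('a \<Rightarrow> 'a) \<Rightarrow> nat \<Rightarrow> 'a \<times> 'a \<Rightarrow> 'a \<times> 'a" where
  "gold_pair_map \<alpha> \<sigma> k = (\<lambda>(x, y). (x ^ (2 ^ k + 1) + \<alpha> * \<sigma> (y ^ (2 ^ k + 1)), x * y))"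

definition gold_pair_polar ::
    "'a::field \<Rightarrow> ('a \<Rightarrow> 'a) \<Rightarrow> nat \<Rightarrow> 'a \<times> 'a \<Rightarrow> 'a \<times> 'a \<Rightarrow> 'a \<times> 'a" where
  "gold_pair_polar \<alpha> \<sigma> k p q =
     (gold_polar k (fst p) (fst q) + \<alpha> * \<sigma> (gold_polar k (snd p) (snd q)),
      fst p * snd q + fst q * snd p)"

lemma gold_pair_map_diff:
  fixes \<alpha> :: "'a::field"
  assumes "CHAR('a) = 2" and "field_automorphism \<sigma>"
  shows "gold_pair_map \<alpha> \<sigma> k (p + q) - gold_pair_map \<alpha> \<sigma> k p
    = gold_pair_map \<alpha> \<sigma> k q + gold_pair_polar \<alpha> \<sigma> k p q"
  unfolding gold_pair_map_def gold_pair_polar_def case_prod_beta fst_add snd_add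
    power_gold_exponent_add[OF assms(1)] field_automorphism_add[OF assms(2)]
  by (simp add: algebra_simps)

lemma gold_pair_polar_add_left:
  fixes \<alpha> :: "'a::field"
  assumes "CHAR('a) = 2" and "field_automorphism \<sigma>"
  shows "gold_pair_polar \<alpha> \<sigma> k (p + p') q = gold_pair_polar \<alpha> \<sigma> k p q + gold_pair_polar \<alpha> \<sigma> k p' q"
  by (simp add: gold_pair_polar_def gold_polar_add_left field_automorphism_add assms algebra_simps)

lemma gold_pair_polar_mult_self:
  fixes \<alpha> :: "'a::field"
  assumes "CHAR('a) = 2"
  shows "gold_pair_polar \<alpha> \<sigma> k (u * a, u * b) (a, b)
    = (a ^ (2 ^ k + 1) * (u ^ 2 ^ k + u) + \<alpha> * \<sigma> (b ^ (2 ^ k + 1) * (u ^ 2 ^ k + u)), 0)"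
  using add_self_CHAR_2[OF assms, of "u * a * b"]
  unfolding gold_pair_polar_def fst_conv snd_conv gold_polar_mult_self
  by (simp add: algebra_simps)

lemma proportional_pairE:
  fixes a b x y :: "'a::field"
  assumes "(a, b) \<noteq> (0, 0)" and "x * b = a * y"
  obtains u where "x = u * a" and "y = u * b"
proof (cases "a = 0")
  case True
  then have "b \<noteq> 0" and "x = 0" using assms by auto
  then show ?thesis using that[of "y / b"] True by simp
next
  case False
  then show ?thesis using that[of "x / a"] assms(2) by (simp add: field_simps)
qed

definition gold_exceptional :: "nat \<Rightarrow> ('a::field \<Rightarrow> 'a) \<Rightarrow> 'a \<Rightarrow> bool" where
  "gold_exceptional k \<sigma> \<alpha> \<longleftrightarrow>
     (\<exists>a t. t ^ (2 ^ k) + t \<noteq> 0 \<and>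
        \<alpha> = a ^ (2 ^ k + 1) * ((t ^ (2 ^ k) + t) / \<sigma> (t ^ (2 ^ k) + t)))"

lemma gold_pair_polar_eq_0D:
  fixes \<alpha> :: "'a::field"
  assumes char: "CHAR('a) = 2" and aut: "field_automorphism \<sigma>"
    and fixed: "\<And>u::'a. u ^ 2 ^ k = u \<Longrightarrow> u = 0 \<or> u = 1"
    and "\<not> gold_exceptional k \<sigma> \<alpha>" and "q \<noteq> 0" and kernel: "gold_pair_polar \<alpha> \<sigma> k p q = 0"
  shows "p = 0 \<or> p = q"
proof -
  obtain a b x y where q: "q = (a, b)" and p: "p = (x, y)" by fastforce
  have "(a, b) \<noteq> (0, 0)" using \<open>q \<noteq> 0\<close> q by (simp add: zero_prod_def)
  moreover have "x * b = a * y"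
    using kernel minus_CHAR_2[OF char, of "x * b" "a * y"]
    by (simp add: p q gold_pair_polar_def zero_prod_def mult.commute)
  ultimately obtain u where x: "x = u * a" and y: "y = u * b" by (rule proportional_pairE)
  define s where "s = u ^ 2 ^ k + u"
  have eq: "a ^ (2 ^ k + 1) * s + \<alpha> * (\<sigma> b ^ (2 ^ k + 1) * \<sigma> s) = 0"
    using kernel gold_pair_polar_mult_self[OF char, of \<alpha> \<sigma> k u a b]
    by (simp add: p q x y s_def zero_prod_def
        field_automorphism_mult[OF aut] field_automorphism_power[OF aut])
  show ?thesis
  proof (cases "s = 0")
    case True
    then have "u ^ 2 ^ k = u" using minus_CHAR_2[OF char, of "u ^ 2 ^ k" u] by (simp add: s_def)
    then have "u = 0 \<or> u = 1" by (rule fixed)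
    then show ?thesis using p q x y by (auto simp: zero_prod_def)
  next
    case False
    have "b \<noteq> 0"
    proof
      assume "b = 0"
      then show False
        using eq False \<open>(a, b) \<noteq> (0, 0)\<close> by (simp add: field_automorphism_zero[OF aut])
    qed
    then have "\<sigma> b \<noteq> 0" "\<sigma> s \<noteq> 0" using False by (simp_all add: field_automorphism_eq_0_iff[OF aut])
    moreover have "\<alpha> * (\<sigma> b ^ (2 ^ k + 1) * \<sigma> s) = a ^ (2 ^ k + 1) * s"
      using eq uminus_CHAR_2[OF char, of "a ^ (2 ^ k + 1) * s"] by (metis add_eq_0_iff)
    ultimately have "\<alpha> = (a / \<sigma> b) ^ (2 ^ k + 1) * (s / \<sigma> s)"
      by (simp add: field_simps)
    then have "gold_exceptional k \<sigma> \<alpha>" using False unfolding gold_exceptional_def s_def by blast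
    then show ?thesis using \<open>\<not> gold_exceptional k \<sigma> \<alpha>\<close> by contradiction
  qed
qed

lemma gold_pair_polar_kernel_card_gt_2:
  fixes \<alpha> :: "'a::{field,finite}"
  assumes char: "CHAR('a) = 2" and aut: "field_automorphism \<sigma>"
    and "gold_exceptional k \<sigma> \<alpha>" and "\<alpha> \<noteq> 0"
  shows "\<exists>q. q \<noteq> 0 \<and> 2 < card {p. gold_pair_polar \<alpha> \<sigma> k p q = 0}"
proof -
  obtain a t where s: "t ^ 2 ^ k + t \<noteq> 0"
    and \<alpha>: "\<alpha> = a ^ (2 ^ k + 1) * ((t ^ 2 ^ k + t) / \<sigma> (t ^ 2 ^ k + t))"
    using \<open>gold_exceptional k \<sigma> \<alpha>\<close> unfolding gold_exceptional_def by blast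
  have "a \<noteq> 0" using \<open>\<alpha> \<noteq> 0\<close> \<alpha> by auto
  have \<alpha>_\<sigma>: "\<alpha> * \<sigma> (t ^ 2 ^ k + t) = a ^ (2 ^ k + 1) * (t ^ 2 ^ k + t)"
    using \<alpha> s by (simp add: field_automorphism_eq_0_iff[OF aut])
  have "t \<noteq> 0" and "t \<noteq> 1" using s add_self_CHAR_2[OF char, of 1] by auto
  let ?K = "{p. gold_pair_polar \<alpha> \<sigma> k p (a, 1) = 0}"
  have "gold_pair_polar \<alpha> \<sigma> k (u * a, u) (a, 1) = 0" if "u \<in> {0, 1, t}" for u
    using that gold_pair_polar_mult_self[OF char, of \<alpha> \<sigma> k u a 1] \<alpha>_\<sigma>
      add_self_CHAR_2[OF char, of 1] add_self_CHAR_2[OF char, of "a ^ (2 ^ k + 1) * (t ^ 2 ^ k + t)"]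
    by (auto simp: zero_prod_def power_0_left field_automorphism_zero[OF aut])
  then have "card ((\<lambda>u. (u * a, u)) ` {0, 1, t}) \<le> card ?K"
    by (intro card_mono[OF finite]) blast
  moreover have "card ((\<lambda>u. (u * a, u)) ` {0, 1, t}) = 3"
    using \<open>t \<noteq> 0\<close> \<open>t \<noteq> 1\<close> by (simp add: card_image inj_on_def)
  moreover have "(a, 1::'a) \<noteq> 0" by (simp add: zero_prod_def)
  ultimately show ?thesis by (intro exI[of _ "(a, 1)"]) simp
qed

lemma card_gold_pair_polar_kernel_le_2_iff:
  fixes \<alpha> :: "'a::{field,finite}"
  assumes char: "CHAR('a) = 2" and aut: "field_automorphism \<sigma>"
    and fixed: "\<And>u::'a. u ^ 2 ^ k = u \<Longrightarrow> u = 0 \<or> u = 1" and "\<alpha> \<noteq> 0"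
  shows "(\<forall>q. q \<noteq> 0 \<longrightarrow> card {p. gold_pair_polar \<alpha> \<sigma> k p q = 0} \<le> 2)
    \<longleftrightarrow> \<not> gold_exceptional k \<sigma> \<alpha>"
proof
  assume bound: "\<forall>q. q \<noteq> 0 \<longrightarrow> card {p. gold_pair_polar \<alpha> \<sigma> k p q = 0} \<le> 2"
  show "\<not> gold_exceptional k \<sigma> \<alpha>"
  proof
    assume "gold_exceptional k \<sigma> \<alpha>"
    then obtain q where "q \<noteq> 0" and "2 < card {p. gold_pair_polar \<alpha> \<sigma> k p q = 0}"
      using gold_pair_polar_kernel_card_gt_2[OF char aut _ \<open>\<alpha> \<noteq> 0\<close>] by blast
    then show False using bound[rule_format, of q] by simp
  qed
next
  assume "\<not> gold_exceptional k \<sigma> \<alpha>"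
  show "\<forall>q. q \<noteq> 0 \<longrightarrow> card {p. gold_pair_polar \<alpha> \<sigma> k p q = 0} \<le> 2"
  proof (intro allI impI)
    fix q :: "'a \<times> 'a"
    assume "q \<noteq> 0"
    then have "{p. gold_pair_polar \<alpha> \<sigma> k p q = 0} \<subseteq> {0, q}"
      using gold_pair_polar_eq_0D[OF char aut fixed \<open>\<not> gold_exceptional k \<sigma> \<alpha>\<close>] by blast
    then have "card {p. gold_pair_polar \<alpha> \<sigma> k p q = 0} \<le> card {0, q}"
      by (rule card_mono[OF finite])
    also have "\<dots> \<le> 2" by (simp add: card_insert_if)
    finally show "card {p. gold_pair_polar \<alpha> \<sigma> k p q = 0} \<le> 2" .
  qed
qed

theorem theorem9:
  fixes m k :: nat and \<alpha> :: "'a::{field,finite}" and \<sigma> :: "'a \<Rightarrow> 'a"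
  assumes "CHAR('a) = 2" and "card (UNIV :: 'a set) = 2 ^ m"
    and "m \<ge> 2" and "even m" and "gcd k m = 1"
    and "\<alpha> \<noteq> 0" and "field_automorphism \<sigma>"
  shows "APN (\<lambda>(x, y). (x ^ (2 ^ k + 1) + \<alpha> * \<sigma> (y ^ (2 ^ k + 1)), x * y))
     \<longleftrightarrow> \<not> (\<exists>a t. t ^ (2 ^ k) + t \<noteq> 0 \<and>
              \<alpha> = a ^ (2 ^ k + 1) * ((t ^ (2 ^ k) + t) / \<sigma> (t ^ (2 ^ k) + t)))"
proof -
  note char = assms(1) and aut = assms(7)
  have fixed: "\<And>u::'a. u ^ 2 ^ k = u \<Longrightarrow> u = 0 \<or> u = 1"
    using power_two_power_fixed_points[OF assms(2,5)] .
  have "APN (gold_pair_map \<alpha> \<sigma> k)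
      \<longleftrightarrow> (\<forall>q. q \<noteq> 0 \<longrightarrow> card {p. gold_pair_polar \<alpha> \<sigma> k p q = 0} \<le> 2)"
    by (rule APN_iff_card_kernel_le_2[where B = "gold_pair_polar \<alpha> \<sigma> k"])
      (simp_all add: gold_pair_map_diff[OF char aut] gold_pair_polar_add_left[OF char aut])
  also have "\<dots> \<longleftrightarrow> \<not> gold_exceptional k \<sigma> \<alpha>"
    by (rule card_gold_pair_polar_kernel_le_2_iff[OF char aut fixed assms(6)])
  finally show ?thesis unfolding gold_pair_map_def gold_exceptional_def .
qed

end
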